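(* For any distribution $P_{\bar Z\bar Y}$ on $\widehat{\mathcal S}\times\widehat{\mathcal X}$, any positive integer $M$ and any $\gamma>0$, there exists an $(M,d_s,d_x,\epsilon)$ code with \[\epsilon\le\mathbb P\big[g_{\bar Z\bar Y}(X,U)\ge\log\gamma\big]+e^{-M/\gamma},\] where $U$ is uniform on $[0,1]$ and independent of $X\sim P_X$, and \[g_{\bar Z\bar Y}(x,t)=\inf\big\{D(P_{ZY}\Vert P_{\bar Z\bar Y}):\ P_{ZY}\text{ a distribution on }\widehat{\mathcal S}\times\widehat{\mathcal X}\text{ with }\pi(x,Z,Y)\le t\text{ almost surely}\big\},\] with $\pi(x,z,y)=\mathbb P[\mathsf d_s(S,z)>d_s\text{ or }\mathsf d_x(x,y)>d_x\mid X=x]$, $S\sim P_{S|X=x}$.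
   Context: Let $\mathcal S,\mathcal X,\widehat{\mathcal S},\widehat{\mathcal X}$ be finite sets, $P_{SX}$ a distribution on $\mathcal S\times\mathcal X$, and $\mathsf d_s:\mathcal S\times\widehat{\mathcal S}\to[0,\infty)$, $\mathsf d_x:\mathcal X\times\widehat{\mathcal X}\to[0,\infty)$ distortion measures; fix $d_s,d_x\ge0$. An $(M,d_s,d_x,\epsilon)$ code is a random encoder $P_{U|X}:\mathcal X\to\{1,\dots,M\}$ and a random decoder $P_{ZY|U}:\{1,\dots,M\}\to\widehat{\mathcal S}\times\widehat{\mathcal X}$ (so $S-X-U-(Z,Y)$) such that $\mathbb P[\mathsf d_s(S,Z)>d_s\text{ or }\mathsf d_x(X,Y)>d_x]\le\epsilon$. $D(\cdot\Vert\cdot)$ is relative entropy; $\log$ and $\exp$ are to a common base. *)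

theory Defs
  imports "HOL-Probability.Probability"
begin

definition rel_ent :: "'a::finite pmf \<Rightarrow> 'a pmf \<Rightarrow> ereal" where
  "rel_ent P Q =
     (if \<forall>a. pmf Q a = 0 \<longrightarrow> pmf P a = 0
      then ereal (\<Sum>a\<in>UNIV. pmf P a * ln (pmf P a / pmf Q a))
      else \<infinity>)"

definition code_joint ::
  "('s \<times> 'x) pmf \<Rightarrow> ('x \<Rightarrow> nat pmf) \<Rightarrow> (nat \<Rightarrow> ('z \<times> 'y) pmf) \<Rightarrow> ('s \<times> 'x \<times> 'z \<times> 'y) pmf" where
  "code_joint PSX enc dec =
     bind_pmf PSX (\<lambda>(s, x). bind_pmf (enc x) (\<lambda>u.
       map_pmf (\<lambda>(z, y). (s, x, z, y)) (dec u)))"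

definition excess_prob ::
  "('s \<times> 'x) pmf \<Rightarrow> ('s \<Rightarrow> 'z \<Rightarrow> real) \<Rightarrow> ('x \<Rightarrow> 'y \<Rightarrow> real) \<Rightarrow> real \<Rightarrow> real
   \<Rightarrow> ('x \<Rightarrow> nat pmf) \<Rightarrow> (nat \<Rightarrow> ('z \<times> 'y) pmf) \<Rightarrow> real" where
  "excess_prob PSX dS dX ds dx enc dec =
     measure_pmf.prob (code_joint PSX enc dec)
       {(s, x, z, y). dS s z > ds \<or> dX x y > dx}"

definition is_code ::
  "('s \<times> 'x) pmf \<Rightarrow> ('s \<Rightarrow> 'z \<Rightarrow> real) \<Rightarrow> ('x \<Rightarrow> 'y \<Rightarrow> real) \<Rightarrow> nat \<Rightarrow> real \<Rightarrow> real \<Rightarrow> real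
   \<Rightarrow> ('x \<Rightarrow> nat pmf) \<Rightarrow> (nat \<Rightarrow> ('z \<times> 'y) pmf) \<Rightarrow> bool" where
  "is_code PSX dS dX M ds dx eps enc dec \<longleftrightarrow>
     (\<forall>x. set_pmf (enc x) \<subseteq> {1..M}) \<and> excess_prob PSX dS dX ds dx enc dec \<le> eps"

definition pi_fn ::
  "('s \<times> 'x) pmf \<Rightarrow> ('s \<Rightarrow> 'z \<Rightarrow> real) \<Rightarrow> ('x \<Rightarrow> 'y \<Rightarrow> real) \<Rightarrow> real \<Rightarrow> real
   \<Rightarrow> 'x \<Rightarrow> 'z \<Rightarrow> 'y \<Rightarrow> real" where
  "pi_fn PSX dS dX ds dx x z y =
     measure_pmf.prob (cond_pmf PSX {p. snd p = x}) {p. dS (fst p) z > ds \<or> dX x y > dx}"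

definition g_fn ::
  "('s \<times> 'x) pmf \<Rightarrow> ('s \<Rightarrow> 'z \<Rightarrow> real) \<Rightarrow> ('x \<Rightarrow> 'y \<Rightarrow> real) \<Rightarrow> real \<Rightarrow> real
   \<Rightarrow> ('z::finite \<times> 'y::finite) pmf \<Rightarrow> 'x \<Rightarrow> real \<Rightarrow> ereal" where
  "g_fn PSX dS dX ds dx Qbar x t =
     Inf {rel_ent P Qbar | P. \<forall>zy\<in>set_pmf P. pi_fn PSX dS dX ds dx x (fst zy) (snd zy) \<le> t}"

end

theory Submission
  imports Defs
begin

(* Random coding: draw M codewords independently from Qbar and let the encoder send x to a
   codeword minimising pi(x, -).  Fix x, put f = pi(x, -) and q t = Qbar{f <= t}.  The expected
   value of min(1, f C_1, ..., f C_M) is at most v + (1 - q v)^M for every level v >= 0.  For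
   the least v with q v > 1/gamma the second term is at most exp(-M/gamma), while for t < v the
   change-of-measure bound D(P || Qbar) >= -ln Qbar(A), valid for P supported on A = {f <= t},
   forces g(x, t) >= ln gamma; hence v is at most the Lebesgue measure of {t. g(x, t) >= ln gamma}.
   Averaging over x, some codebook does no worse than the average. *)

lemma bind_cond_pmf_snd: "bind_pmf (map_pmf snd p) (\<lambda>x. cond_pmf p {q. snd q = x}) = p"
  by (rule bind_cond_pmf_cancel) (auto simp: vimage_def eq_commute)

lemma prob_eq_sum_cond_pmf_snd:
  fixes p :: "('a \<times> 'b::finite) pmf"
  shows "measure_pmf.prob p A
    = (\<Sum>x\<in>UNIV. pmf (map_pmf snd p) x * measure_pmf.prob (cond_pmf p {q. snd q = x}) A)"
proof -
  have "ennreal (measure_pmf.prob p A)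
      = emeasure (bind_pmf (map_pmf snd p) (\<lambda>x. cond_pmf p {q. snd q = x})) A"
    by (simp only: bind_cond_pmf_snd measure_pmf.emeasure_eq_measure)
  also have "\<dots> = (\<integral>\<^sup>+x. emeasure (cond_pmf p {q. snd q = x}) A \<partial>map_pmf snd p)"
    by (rule emeasure_bind_pmf)
  also have "\<dots> = ennreal (measure_pmf.expectation (map_pmf snd p)
                     (\<lambda>x. measure_pmf.prob (cond_pmf p {q. snd q = x}) A))"
    unfolding measure_pmf.emeasure_eq_measure
    by (rule nn_integral_eq_integral) (simp_all only: integrable_measure_pmf_finite finite, simp)
  also have "\<dots> = ennreal (\<Sum>x\<in>UNIV. pmf (map_pmf snd p) x *
                                 measure_pmf.prob (cond_pmf p {q. snd q = x}) A)"
    by (subst integral_measure_pmf_real[where A=UNIV]) (simp_all add: mult.commute)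
  finally show ?thesis by (simp add: sum_nonneg)
qed

lemma prob_eq_sum_cond_pmf_snd_fiber:
  fixes p :: "('a \<times> 'b::finite) pmf"
  shows "measure_pmf.prob p {q. R (fst q) (snd q)}
    = (\<Sum>x\<in>UNIV. pmf (map_pmf snd p) x * measure_pmf.prob (cond_pmf p {q. snd q = x}) {q. R (fst q) x})"
  unfolding prob_eq_sum_cond_pmf_snd[of p]
proof (rule sum.cong)
  fix x
  let ?px = "cond_pmf p {q. snd q = x}"
  show "pmf (map_pmf snd p) x * measure_pmf.prob ?px {q. R (fst q) (snd q)}
      = pmf (map_pmf snd p) x * measure_pmf.prob ?px {q. R (fst q) x}"
  proof (cases "set_pmf p \<inter> {q. snd q = x} = {}")
    case True
    \<comment> \<open>\<open>cond_pmf\<close> is unspecified on a null fiber, but its weight vanishes\<close>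
    then have "pmf (map_pmf snd p) x = 0" by (auto simp: pmf_eq_0_set_pmf)
    then show ?thesis by simp
  next
    case False
    then have "measure_pmf.prob ?px {q. R (fst q) (snd q)} = measure_pmf.prob ?px {q. R (fst q) x}"
      by (subst (1 2) measure_Int_set_pmf[symmetric]) (auto intro!: arg_cong[where f="measure_pmf.prob _"])
    then show ?thesis by simp
  qed
qed simp

lemma excess_prob_deterministic:
  fixes PSX :: "('s \<times> 'x::finite) pmf"
  shows "excess_prob PSX dS dX ds dx (\<lambda>x. return_pmf (enc x)) (\<lambda>u. return_pmf (dec u))
    = (\<Sum>x\<in>UNIV. pmf (map_pmf snd PSX) x * pi_fn PSX dS dX ds dx x (fst (dec (enc x))) (snd (dec (enc x))))"
proof -
  have "code_joint PSX (\<lambda>x. return_pmf (enc x)) (\<lambda>u. return_pmf (dec u))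
      = map_pmf (\<lambda>(s, x). (s, x, dec (enc x))) PSX"
    unfolding code_joint_def map_pmf_def by (simp add: bind_return_pmf split_beta case_prod_beta')
  then have "excess_prob PSX dS dX ds dx (\<lambda>x. return_pmf (enc x)) (\<lambda>u. return_pmf (dec u))
      = measure_pmf.prob PSX {q. dS (fst q) (fst (dec (enc (snd q)))) > ds \<or>
                                 dX (snd q) (snd (dec (enc (snd q)))) > dx}"
    unfolding excess_prob_def by (simp add: vimage_def split_beta)
  then show ?thesis
    unfolding pi_fn_def by (simp add: prob_eq_sum_cond_pmf_snd_fiber[where
      R = "\<lambda>s x. dS s (fst (dec (enc x))) > ds \<or> dX x (snd (dec (enc x))) > dx"])
qed

lemma foldl_min_mem: "foldl (\<lambda>a c. min a (f c)) a cs \<in> insert a (f ` set cs)"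
proof (induction cs arbitrary: a)
  case (Cons c cs)
  then show ?case using Cons.IH[of "min a (f c)"] by (auto simp: min_def split: if_splits)
qed simp

lemma foldl_min_attained:
  fixes f :: "'c \<Rightarrow> 'a::linorder"
  assumes "cs \<noteq> []" and "\<And>c. c \<in> set cs \<Longrightarrow> f c \<le> a"
  shows "\<exists>i<length cs. f (cs ! i) \<le> foldl (\<lambda>b c. min b (f c)) a cs"
proof -
  have "\<exists>c\<in>set cs. f c \<le> foldl (\<lambda>b c. min b (f c)) a cs"
    using foldl_min_mem[of f a cs] assms by (cases cs) auto
  then show ?thesis by (auto simp: in_set_conv_nth)
qed

lemma exists_code_le_codebook_min:
  fixes PSX :: "('s \<times> 'x::finite) pmf" and cs :: "('z \<times> 'y) list"
  assumes "cs \<noteq> []"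
  shows "\<exists>enc dec. (\<forall>x. set_pmf (enc x) \<subseteq> {1..length cs}) \<and>
    excess_prob PSX dS dX ds dx enc dec
      \<le> (\<Sum>x\<in>UNIV. pmf (map_pmf snd PSX) x *
            foldl (\<lambda>a c. min a (pi_fn PSX dS dX ds dx x (fst c) (snd c))) 1 cs)"
proof -
  let ?\<pi> = "\<lambda>x c. pi_fn PSX dS dX ds dx x (fst c) (snd c)"
  have "\<forall>x. \<exists>i. i < length cs \<and> ?\<pi> x (cs ! i) \<le> foldl (\<lambda>a c. min a (?\<pi> x c)) 1 cs"
    by (intro allI foldl_min_attained[OF assms]) (simp add: pi_fn_def)
  then obtain idx where idx: "\<And>x. idx x < length cs"
    and idx_min: "\<And>x. ?\<pi> x (cs ! idx x) \<le> foldl (\<lambda>a c. min a (?\<pi> x c)) 1 cs"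
    using choice[of "\<lambda>x i. i < length cs \<and> ?\<pi> x (cs ! i) \<le> foldl (\<lambda>a c. min a (?\<pi> x c)) 1 cs"]
    by blast
  define enc where "enc x = return_pmf (Suc (idx x))" for x
  define dec where "dec u = return_pmf (cs ! (u - 1))" for u
  have enc_range: "\<forall>x. set_pmf (enc x) \<subseteq> {1..length cs}"
    using idx by (simp add: enc_def Suc_le_eq)
  have "excess_prob PSX dS dX ds dx enc dec = (\<Sum>x\<in>UNIV. pmf (map_pmf snd PSX) x * ?\<pi> x (cs ! idx x))"
    unfolding enc_def dec_def excess_prob_deterministic by simp
  also have "\<dots> \<le> (\<Sum>x\<in>UNIV. pmf (map_pmf snd PSX) x * foldl (\<lambda>a c. min a (?\<pi> x c)) 1 cs)"
    by (intro sum_mono mult_left_mono idx_min) simp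
  finally show ?thesis
    using enc_range by (intro exI[of _ enc] exI[of _ dec] conjI)
qed

(* E[min(a, f C_1, ..., f C_k)] for C_1, ..., C_k drawn independently from Q *)
primrec expected_running_min :: "('c \<Rightarrow> real) \<Rightarrow> 'c pmf \<Rightarrow> real \<Rightarrow> nat \<Rightarrow> real" where
  "expected_running_min f Q a 0 = a"
| "expected_running_min f Q a (Suc k) =
     measure_pmf.expectation Q (\<lambda>c. expected_running_min f Q (min a (f c)) k)"

lemma exists_le_expectation:
  fixes Q :: "'c::finite pmf" and F :: "'c \<Rightarrow> real"
  shows "\<exists>c\<in>set_pmf Q. F c \<le> measure_pmf.expectation Q F"
proof -
  obtain c where c: "c \<in> set_pmf Q" and c_min: "\<And>c'. c' \<in> set_pmf Q \<Longrightarrow> F c \<le> F c'"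
    using Min_in[of "F ` set_pmf Q"] Min_le[of "F ` set_pmf Q"] set_pmf_not_empty[of Q] by fastforce
  have "measure_pmf.expectation Q (\<lambda>_. F c) \<le> measure_pmf.expectation Q F"
    by (rule integral_mono_AE) (auto simp: AE_measure_pmf_iff c_min integrable_measure_pmf_finite)
  then show ?thesis using c by auto
qed

lemma expected_running_min_le:
  fixes Q :: "'c::finite pmf"
  shows "expected_running_min f Q a k \<le> a"
proof (induction k arbitrary: a)
  case 0 then show ?case by simp
next
  case (Suc k)
  have "expected_running_min f Q a (Suc k) \<le> measure_pmf.expectation Q (\<lambda>_. a)"
    unfolding expected_running_min.simps
    by (rule integral_mono) (auto intro: order_trans[OF Suc.IH] simp: integrable_measure_pmf_finite)
  then show ?case by simp
qed

lemma expected_running_min_le_threshold: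
  fixes Q :: "'c::finite pmf"
  assumes "s \<ge> 0"
  shows "expected_running_min f Q a k \<le> s + (1 - measure_pmf.prob Q {c. f c \<le> s}) ^ k * a"
proof (induction k arbitrary: a)
  case 0 then show ?case using assms by simp
next
  case (Suc k)
  define q where "q = measure_pmf.prob Q {c. f c \<le> s}"
  have "expected_running_min f Q a (Suc k)
      \<le> measure_pmf.expectation Q (\<lambda>c. s + (1 - q) ^ k * a * indicator (- {c. f c \<le> s}) c)"
    unfolding expected_running_min.simps
  proof (rule integral_mono)
    fix c
    show "expected_running_min f Q (min a (f c)) k \<le> s + (1 - q) ^ k * a * indicator (- {c. f c \<le> s}) c"
    proof (cases "f c \<le> s")
      case True
      then show ?thesis using expected_running_min_le[of f Q "min a (f c)" k] by simp
    next
      case False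
      have "(1 - q) ^ k * min a (f c) \<le> (1 - q) ^ k * a"
        by (rule mult_left_mono) (auto simp: q_def)
      then show ?thesis using Suc.IH[of "min a (f c)"] False unfolding q_def by simp
    qed
  qed (simp_all add: integrable_measure_pmf_finite)
  also have "\<dots> = s + (1 - q) ^ k * a * measure_pmf.prob Q (UNIV - {c. f c \<le> s})"
    by (simp add: integrable_measure_pmf_finite Compl_eq_Diff_UNIV)
  also have "\<dots> = s + (1 - q) ^ k * a * (1 - q)"
    using measure_pmf.prob_compl[of "{c. f c \<le> s}" Q] by (simp add: q_def)
  finally show ?case unfolding q_def by (simp add: algebra_simps)
qed

(* Derandomization: each codeword in turn is chosen no worse than the average over Q. *)
lemma exists_codebook_le_expected_running_min:
  fixes Q :: "'c::finite pmf" and w :: "'x::finite \<Rightarrow> real" and h :: "'x \<Rightarrow> 'c \<Rightarrow> real"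
  shows "\<exists>cs. length cs = k \<and>
    (\<Sum>x\<in>UNIV. w x * foldl (\<lambda>a c. min a (h x c)) (m x) cs)
      \<le> (\<Sum>x\<in>UNIV. w x * expected_running_min (h x) Q (m x) k)"
proof (induction k arbitrary: m)
  case 0 then show ?case by simp
next
  case (Suc k)
  define F where "F c = (\<Sum>x\<in>UNIV. w x * expected_running_min (h x) Q (min (m x) (h x c)) k)" for c
  have mean: "(\<Sum>x\<in>UNIV. w x * expected_running_min (h x) Q (m x) (Suc k))
      = measure_pmf.expectation Q F"
    unfolding F_def expected_running_min.simps
    by (simp add: integrable_measure_pmf_finite)
  obtain c where c: "F c \<le> measure_pmf.expectation Q F"
    using exists_le_expectation by blast
  obtain cs where "length cs = k"
    and "(\<Sum>x\<in>UNIV. w x * foldl (\<lambda>a c. min a (h x c)) (min (m x) (h x c)) cs) \<le> F c"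
    using Suc.IH[of "\<lambda>x. min (m x) (h x c)"] unfolding F_def by blast
  then show ?case
    using c mean by (intro exI[of _ "c # cs"]) auto
qed

lemma one_minus_power_le_exp:
  fixes q r :: real
  assumes "r \<le> q" and "q \<le> 1"
  shows "(1 - q) ^ n \<le> exp (- real n * r)"
proof (cases "n = 0")
  case False
  then have "(1 - q) ^ n \<le> exp (- real n * q)"
    using exp_ge_one_minus_x_over_n_power_n[of "real n * q" n] \<open>q \<le> 1\<close> by simp
  also have "\<dots> \<le> exp (- real n * r)"
    using \<open>r \<le> q\<close> by (simp add: mult_left_mono)
  finally show ?thesis .
qed simp

lemma exists_least_level_prob_gt:
  fixes f :: "'c::finite \<Rightarrow> real"
  assumes "r \<ge> 0" and "measure_pmf.prob Q {c. f c \<le> s} > r"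
  shows "\<exists>v\<in>range f. measure_pmf.prob Q {c. f c \<le> v} > r
           \<and> (\<forall>s. measure_pmf.prob Q {c. f c \<le> s} > r \<longrightarrow> v \<le> s)"
proof -
  define V where "V = {v \<in> range f. measure_pmf.prob Q {c. f c \<le> v} > r}"
  have below: "\<exists>v\<in>V. v \<le> s" if s: "measure_pmf.prob Q {c. f c \<le> s} > r" for s
  proof -
    have "{c. f c \<le> s} \<noteq> {}" using s \<open>r \<ge> 0\<close> by (metis measure_empty not_le)
    then have "Max (f ` {c. f c \<le> s}) \<in> f ` {c. f c \<le> s}" by (intro Max_in) auto
    moreover have "{c. f c \<le> Max (f ` {c. f c \<le> s})} = {c. f c \<le> s}"
      using calculation by (auto intro: Max_ge)
    ultimately show ?thesis using s unfolding V_def by (intro bexI[of _ "Max (f ` {c. f c \<le> s})"]) auto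
  qed
  have "finite V" "V \<noteq> {}" using below[OF assms(2)] unfolding V_def by auto
  then have "Min V \<in> V" and "\<And>v. v \<in> V \<Longrightarrow> Min V \<le> v" by auto
  with below have "Min V \<le> s" if "measure_pmf.prob Q {c. f c \<le> s} > r" for s
    using that by (meson order_trans)
  with \<open>Min V \<in> V\<close> show ?thesis unfolding V_def by blast
qed

lemma le_measure_superlevel_antimono:
  fixes g :: "real \<Rightarrow> 'a::linorder"
  assumes "antimono g" and "0 \<le> v" "v \<le> 1" and "\<And>t. 0 \<le> t \<Longrightarrow> t < v \<Longrightarrow> c0 \<le> g t"
  shows "v \<le> measure lborel {t\<in>{0..1}. c0 \<le> g t}"
proof -
  define B where "B = {t\<in>{0..1}. c0 \<le> g t}"
  have "is_interval B"
    unfolding is_interval_1 B_def using \<open>antimono g\<close> by (auto dest: antimonoD intro: order_trans)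
  then have "B \<in> sets lborel" by (simp add: real_interval_borel_measurable)
  then have "B \<in> fmeasurable lborel"
    by (rule fmeasurableI2[of "{0..1}", rotated 2]) (auto simp: B_def fmeasurable_def)
  moreover have "{0..<v} \<subseteq> B" using assms(3,4) unfolding B_def by auto
  ultimately show ?thesis
    using measure_mono_fmeasurable[of "{0..<v}" B lborel] \<open>0 \<le> v\<close> unfolding B_def by simp
qed

lemma expected_running_min_le_measure_superlevel:
  fixes f :: "'c::finite \<Rightarrow> real" and g :: "real \<Rightarrow> 'a::linorder"
  assumes f_nonneg: "\<And>c. 0 \<le> f c" and f_le_1: "\<And>c. f c \<le> 1" and "antimono g"
    and level: "\<And>t. g t < c0 \<Longrightarrow> measure_pmf.prob Q {c. f c \<le> t} > 1 / \<gamma>"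
    and "\<gamma> > 0"
  shows "expected_running_min f Q 1 M \<le> measure lborel {t\<in>{0..1}. c0 \<le> g t} + exp (- real M / \<gamma>)"
proof (cases "\<exists>s\<in>{0..1}. measure_pmf.prob Q {c. f c \<le> s} > 1 / \<gamma>")
  case False
  have "c0 \<le> g t" if "0 \<le> t" "t < 1" for t
  proof (rule ccontr)
    assume "\<not> c0 \<le> g t"
    then have "measure_pmf.prob Q {c. f c \<le> t} > 1 / \<gamma>" by (intro level) simp
    with False that show False by auto
  qed
  then have "1 \<le> measure lborel {t\<in>{0..1}. c0 \<le> g t}"
    by (intro le_measure_superlevel_antimono[OF \<open>antimono g\<close>]) auto
  then show ?thesis using expected_running_min_le[of f Q 1 M] exp_gt_zero[of "- real M / \<gamma>"] by linarith
next
  case True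
  then obtain s where "s \<le> 1" and s_level: "measure_pmf.prob Q {c. f c \<le> s} > 1 / \<gamma>" by auto
  then obtain v where "v \<in> range f" and v_level: "measure_pmf.prob Q {c. f c \<le> v} > 1 / \<gamma>"
    and v_least: "\<And>t. measure_pmf.prob Q {c. f c \<le> t} > 1 / \<gamma> \<Longrightarrow> v \<le> t"
    using exists_least_level_prob_gt[of "1 / \<gamma>" Q f s] \<open>\<gamma> > 0\<close> by auto
  then have "0 \<le> v" "v \<le> 1" using f_nonneg v_least[OF s_level] \<open>s \<le> 1\<close> by auto
  have "c0 \<le> g t" if "t < v" for t
  proof (rule ccontr)
    assume "\<not> c0 \<le> g t"
    then have "v \<le> t" by (intro v_least level) simp
    with \<open>t < v\<close> show False by simp
  qed
  with \<open>0 \<le> v\<close> \<open>v \<le> 1\<close> have "v \<le> measure lborel {t\<in>{0..1}. c0 \<le> g t}"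
    by (intro le_measure_superlevel_antimono[OF \<open>antimono g\<close>]) auto
  moreover have "expected_running_min f Q 1 M \<le> v + (1 - measure_pmf.prob Q {c. f c \<le> v}) ^ M"
    using expected_running_min_le_threshold[OF \<open>0 \<le> v\<close>, of f Q 1 M] by simp
  moreover have "(1 - measure_pmf.prob Q {c. f c \<le> v}) ^ M \<le> exp (- real M / \<gamma>)"
    using one_minus_power_le_exp[of "1 / \<gamma>" "measure_pmf.prob Q {c. f c \<le> v}" M] v_level
    by simp
  ultimately show ?thesis by linarith
qed

lemma mult_ln_div_ge:
  fixes p q r :: real
  assumes "p > 0" "q > 0" "r > 0"
  shows "p - p * ln r - q / r \<le> p * ln (p / q)"
proof -
  have "p * ln (q / (p * r)) \<le> p * (q / (p * r) - 1)"
    using assms by (intro mult_left_mono ln_le_minus_one) auto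
  moreover have "p * ln (q / (p * r)) = - p * ln (p / q) - p * ln r"
    using assms by (simp add: ln_div ln_mult algebra_simps)
  moreover have "p * (q / (p * r) - 1) = q / r - p"
    using assms by (simp add: field_simps)
  ultimately show ?thesis by linarith
qed

lemma rel_ent_ge_neg_ln_prob:
  fixes P Q :: "'a::finite pmf"
  assumes "set_pmf P \<subseteq> A" and "rel_ent P Q \<noteq> \<infinity>"
  shows "measure_pmf.prob Q A > 0" and "ereal (- ln (measure_pmf.prob Q A)) \<le> rel_ent P Q"
proof -
  have ac: "pmf Q a = 0 \<Longrightarrow> pmf P a = 0" for a
    using assms(2) unfolding rel_ent_def by (auto split: if_splits)
  define qA where "qA = measure_pmf.prob Q A"
  obtain a0 where "a0 \<in> set_pmf P" using set_pmf_not_empty[of P] by blast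
  then have "0 < pmf Q a0" "pmf Q a0 \<le> qA"
    using ac assms(1) measure_pmf.finite_measure_mono[of "{a0}" A Q]
    by (auto simp: qA_def measure_pmf_single set_pmf_iff less_le)
  then show "qA > 0" unfolding qA_def by simp
  then have pointwise: "pmf P a - pmf P a * ln qA - (if a \<in> A then pmf Q a / qA else 0)
      \<le> pmf P a * ln (pmf P a / pmf Q a)" for a
  proof (cases "pmf P a > 0")
    case True
    then have "a \<in> A" "pmf Q a > 0" using assms(1) ac by (auto simp: set_pmf_iff less_le)
    with True \<open>qA > 0\<close> show ?thesis using mult_ln_div_ge by simp
  qed (simp_all add: less_le)
  have "- ln qA = (\<Sum>a\<in>UNIV. pmf P a - pmf P a * ln qA - (if a \<in> A then pmf Q a / qA else 0))"
    using \<open>qA > 0\<close>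
    by (simp add: sum_subtractf sum_distrib_right[symmetric] sum.If_cases sum_divide_distrib[symmetric]
        sum_pmf_eq_1 qA_def measure_measure_pmf_finite)
  also have "\<dots> \<le> (\<Sum>a\<in>UNIV. pmf P a * ln (pmf P a / pmf Q a))"
    by (rule sum_mono) (rule pointwise)
  finally have "- ln qA \<le> (\<Sum>a\<in>UNIV. pmf P a * ln (pmf P a / pmf Q a))" .
  then show "ereal (- ln qA) \<le> rel_ent P Q"
    unfolding rel_ent_def using ac by simp
qed

lemma prob_gt_inverse_if_rel_ent_lt:
  fixes P Q :: "'a::finite pmf"
  assumes "set_pmf P \<subseteq> A" and "rel_ent P Q < ereal (ln \<gamma>)" and "\<gamma> > 0"
  shows "measure_pmf.prob Q A > 1 / \<gamma>"
proof -
  have finite_ent: "rel_ent P Q \<noteq> \<infinity>" using assms(2) by auto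
  have "ereal (- ln (measure_pmf.prob Q A)) < ereal (ln \<gamma>)"
    using rel_ent_ge_neg_ln_prob(2)[OF assms(1) finite_ent] assms(2) by (rule order_le_less_trans)
  moreover have "measure_pmf.prob Q A > 0"
    using rel_ent_ge_neg_ln_prob(1)[OF assms(1) finite_ent] .
  ultimately have "ln (1 / \<gamma>) < ln (measure_pmf.prob Q A)" and "measure_pmf.prob Q A > 0"
    using \<open>\<gamma> > 0\<close> by (simp_all add: ln_div)
  then show ?thesis using \<open>\<gamma> > 0\<close> by simp
qed

lemma g_fn_antimono: "antimono (g_fn PSX dS dX ds dx Qbar x)"
proof (rule antimonoI)
  fix t t' :: real
  assume "t \<le> t'"
  then show "g_fn PSX dS dX ds dx Qbar x t' \<le> g_fn PSX dS dX ds dx Qbar x t"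
    unfolding g_fn_def by (intro Inf_superset_mono) (blast intro: order_trans)
qed

lemma prob_pi_fn_le_gt_if_g_fn_lt:
  assumes "g_fn PSX dS dX ds dx Qbar x t < ereal (ln \<gamma>)" and "\<gamma> > 0"
  shows "measure_pmf.prob Qbar {c. pi_fn PSX dS dX ds dx x (fst c) (snd c) \<le> t} > 1 / \<gamma>"
proof -
  obtain P where "set_pmf P \<subseteq> {c. pi_fn PSX dS dX ds dx x (fst c) (snd c) \<le> t}"
    and "rel_ent P Qbar < ereal (ln \<gamma>)"
    using assms(1) unfolding g_fn_def by (auto simp: Inf_less_iff)
  then show ?thesis by (rule prob_gt_inverse_if_rel_ent_lt[OF _ _ \<open>\<gamma> > 0\<close>])
qed

lemma sum_pmf_mult_le_add_const:
  fixes p :: "'a::finite pmf"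
  assumes "\<And>x. f x \<le> g x + e"
  shows "(\<Sum>x\<in>UNIV. pmf p x * f x) \<le> (\<Sum>x\<in>UNIV. pmf p x * g x) + e"
proof -
  have "(\<Sum>x\<in>UNIV. pmf p x * f x) \<le> (\<Sum>x\<in>UNIV. pmf p x * (g x + e))"
    using assms by (intro sum_mono mult_left_mono) simp_all
  also have "\<dots> = (\<Sum>x\<in>UNIV. pmf p x * g x) + e"
    by (simp add: distrib_left sum.distrib sum_distrib_right[symmetric] sum_pmf_eq_1)
  finally show ?thesis .
qed

theorem theorem2:
  fixes PSX :: "('s::finite \<times> 'x::finite) pmf"
    and dS :: "'s \<Rightarrow> 'z::finite \<Rightarrow> real"
    and dX :: "'x \<Rightarrow> 'y::finite \<Rightarrow> real"
    and ds dx :: real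
    and Qbar :: "('z \<times> 'y) pmf"
    and M :: nat and \<gamma> :: real
  assumes "\<forall>s z. dS s z \<ge> 0" and "\<forall>x y. dX x y \<ge> 0"
    and "ds \<ge> 0" and "dx \<ge> 0"
    and "M > 0" and "\<gamma> > 0"
  shows "\<exists>enc dec. is_code PSX dS dX M ds dx
           ((\<Sum>x\<in>UNIV. pmf (map_pmf snd PSX) x *
               measure lborel {t\<in>{0..1}. g_fn PSX dS dX ds dx Qbar x t \<ge> ereal (ln \<gamma>)})
            + exp (- real M / \<gamma>)) enc dec"
proof -
  define \<pi> where "\<pi> x c = pi_fn PSX dS dX ds dx x (fst c) (snd c)" for x c
  define w where "w = pmf (map_pmf snd PSX)"
  define L where "L x = measure lborel {t\<in>{0..1}. g_fn PSX dS dX ds dx Qbar x t \<ge> ereal (ln \<gamma>)}" for x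
  obtain cs where "length cs = M" and codebook:
    "(\<Sum>x\<in>UNIV. w x * foldl (\<lambda>a c. min a (\<pi> x c)) 1 cs)
       \<le> (\<Sum>x\<in>UNIV. w x * expected_running_min (\<pi> x) Qbar 1 M)"
    using exists_codebook_le_expected_running_min[where Q=Qbar and w=w and h=\<pi> and k=M and m="\<lambda>_. 1"]
    by auto
  with \<open>M > 0\<close> obtain enc dec where enc: "\<forall>x. set_pmf (enc x) \<subseteq> {1..M}"
    and excess: "excess_prob PSX dS dX ds dx enc dec
                   \<le> (\<Sum>x\<in>UNIV. w x * foldl (\<lambda>a c. min a (\<pi> x c)) 1 cs)"
    using exists_code_le_codebook_min[of cs PSX dS dX ds dx] unfolding w_def \<pi>_def by auto
  have "0 \<le> \<pi> x c" "\<pi> x c \<le> 1" for x c by (simp_all add: \<pi>_def pi_fn_def)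
  then have "expected_running_min (\<pi> x) Qbar 1 M \<le> L x + exp (- real M / \<gamma>)" for x
    unfolding L_def using \<open>\<gamma> > 0\<close>
    by (intro expected_running_min_le_measure_superlevel g_fn_antimono)
       (auto simp: \<pi>_def intro: prob_pi_fn_le_gt_if_g_fn_lt)
  then have "(\<Sum>x\<in>UNIV. w x * expected_running_min (\<pi> x) Qbar 1 M)
      \<le> (\<Sum>x\<in>UNIV. w x * L x) + exp (- real M / \<gamma>)"
    unfolding w_def by (rule sum_pmf_mult_le_add_const)
  with excess codebook have "excess_prob PSX dS dX ds dx enc dec
      \<le> (\<Sum>x\<in>UNIV. w x * L x) + exp (- real M / \<gamma>)" by linarith
  with enc have "is_code PSX dS dX M ds dx ((\<Sum>x\<in>UNIV. w x * L x) + exp (- real M / \<gamma>)) enc dec"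
    unfolding is_code_def by (intro conjI)
  then show ?thesis unfolding w_def L_def by (intro exI)
qed

end
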